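(* For all $U,U_0\in\mathbb{O}_+(p,r)$, $$\|\mathcal{A}(U)-\mathcal{A}(U_0)\|_F\le 2\|U-U_0\|_F .$$
   Context: Fix $1\le r\le p$. $\mathbb{O}(p,r)=\{U\in\mathbb{R}^{p\times r}:U^TU=I_r\}$ and $\mathbb{O}_+(p,r)=\{U=\begin{bmatrix}Q_1\\Q_2\end{bmatrix}\in\mathbb{O}(p,r): Q_1\in\mathbb{R}^{r\times r}\text{ symmetric positive definite}\}$. The inverse Cayley parameterization is the map $\mathcal{A}:\mathbb{O}_+(p,r)\to\mathbb{R}^{(p-r)\times r}$, $\mathcal{A}(U)=Q_2(I_r+Q_1)^{-1}$ for $U=\begin{bmatrix}Q_1\\Q_2\end{bmatrix}$. $\|\cdot\|_F$ is the Frobenius norm. *)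

theory Defs
  imports "Jordan_Normal_Form.Matrix"
begin

definition orth_frame :: "nat \<Rightarrow> nat \<Rightarrow> real mat set" where
  "orth_frame p r = {U. U \<in> carrier_mat p r \<and> transpose_mat U * U = 1\<^sub>m r}"

definition sym_pos_def :: "nat \<Rightarrow> real mat \<Rightarrow> bool" where
  "sym_pos_def r Q \<longleftrightarrow> Q \<in> carrier_mat r r \<and> transpose_mat Q = Q \<and>
     (\<forall>x \<in> carrier_vec r. x \<noteq> 0\<^sub>v r \<longrightarrow> 0 < x \<bullet> (Q *\<^sub>v x))"

definition blockQ1 :: "nat \<Rightarrow> real mat \<Rightarrow> real mat" where
  "blockQ1 r U = mat r r (\<lambda>(i,j). U $$ (i,j))"

definition blockQ2 :: "nat \<Rightarrow> real mat \<Rightarrow> real mat" where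
  "blockQ2 r U = mat (dim_row U - r) r (\<lambda>(i,j). U $$ (i + r, j))"

definition orth_plus :: "nat \<Rightarrow> nat \<Rightarrow> real mat set" where
  "orth_plus p r = {U \<in> orth_frame p r. sym_pos_def r (blockQ1 r U)}"

definition mat_inv :: "nat \<Rightarrow> real mat \<Rightarrow> real mat" where
  "mat_inv r M = (THE B. B \<in> carrier_mat r r \<and> M * B = 1\<^sub>m r \<and> B * M = 1\<^sub>m r)"

definition inv_cayley :: "nat \<Rightarrow> real mat \<Rightarrow> real mat" where
  "inv_cayley r U = blockQ2 r U * mat_inv r (1\<^sub>m r + blockQ1 r U)"

definition frob_norm :: "real mat \<Rightarrow> real" where
  "frob_norm M = sqrt (\<Sum>i<dim_row M. \<Sum>j<dim_col M. (M $$ (i,j))\<^sup>2)"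

end

theory Submission
  imports Defs "HOL-Analysis.L2_Norm" "Jordan_Normal_Form.Determinant"
begin

text \<open>Write \<open>N = (I + Q\<^sub>1)\<^sup>-\<^sup>1\<close>, \<open>N\<^sub>0 = (I + R\<^sub>1)\<^sup>-\<^sup>1\<close> for the upper blocks \<open>Q\<^sub>1, R\<^sub>1\<close> of
  \<open>U, U\<^sub>0\<close>, and \<open>A\<^sub>0 = R\<^sub>2 N\<^sub>0\<close>. Then
  \<open>\<A>(U) - \<A>(U\<^sub>0) = (Q\<^sub>2 - R\<^sub>2) N + A\<^sub>0 (R\<^sub>1 - Q\<^sub>1) N\<close>.
  Since \<open>Q\<^sub>1\<close> is positive definite, \<open>|(I + Q\<^sub>1) y|\<^sup>2 \<ge> |y|\<^sup>2 + |Q\<^sub>1 y|\<^sup>2\<close>, so \<open>N\<close> is a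
  contraction; and since \<open>|R\<^sub>1 y|\<^sup>2 + |R\<^sub>2 y|\<^sup>2 = |y|\<^sup>2\<close> for an orthonormal frame, \<open>R\<^sub>2\<close> and hence
  \<open>A\<^sub>0\<close> are contractions too. Multiplying by contractions does not increase the Frobenius norm, and each block
  difference is bounded by \<open>\<parallel>U - U\<^sub>0\<parallel>\<^sub>F\<close>.\<close>

lemma scalar_prod_self_eq_sum_squares:
  "(v :: real vec) \<in> carrier_vec n \<Longrightarrow> v \<bullet> v = (\<Sum>i<n. (v $ i)\<^sup>2)"
  unfolding scalar_prod_def by (auto simp: power2_eq_square atLeast0LessThan)

lemma scalar_prod_self_nonneg: "0 \<le> (v :: real vec) \<bullet> v"
  unfolding scalar_prod_def by (auto intro: sum_nonneg)

lemma scalar_prod_self_le_0_imp_zero: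
  assumes v: "(v :: real vec) \<in> carrier_vec n" and le: "v \<bullet> v \<le> 0"
  shows "v = 0\<^sub>v n"
proof -
  have "(\<Sum>i<n. (v $ i)\<^sup>2) = 0"
    using le scalar_prod_self_eq_sum_squares[OF v] scalar_prod_self_nonneg[of v] by simp
  then have "\<forall>i\<in>{..<n}. (v $ i)\<^sup>2 = 0"
    by (subst sum_nonneg_eq_0_iff[symmetric]) auto
  then show ?thesis using v by (intro eq_vecI) auto
qed

lemma sum_lessThan_split:
  "r \<le> (p :: nat) \<Longrightarrow> (\<Sum>i<p. f i) = (\<Sum>i<r. f i) + (\<Sum>i<p - r. (f (i + r) :: 'a :: comm_monoid_add))"
proof -
  assume rp: "r \<le> p"
  have "(\<Sum>i<p. f i) = (\<Sum>i=0..<r. f i) + (\<Sum>i=r..<p. f i)"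
    using rp by (simp add: sum.atLeastLessThan_concat lessThan_atLeast0)
  also have "(\<Sum>i=r..<p. f i) = (\<Sum>i=0+r..<(p - r)+r. f i)" using rp by simp
  also have "\<dots> = (\<Sum>i=0..<p - r. f (i + r))" by (rule sum.shift_bounds_nat_ivl)
  finally show ?thesis by (simp add: lessThan_atLeast0)
qed

lemma frob_norm_eq_L2_set:
  "M \<in> carrier_mat m n \<Longrightarrow> frob_norm M = L2_set (\<lambda>(i, j). M $$ (i, j)) ({..<m} \<times> {..<n})"
  unfolding frob_norm_def L2_set_def by (simp add: sum.cartesian_product case_prod_beta)

lemma frob_norm_add_le:
  assumes "X \<in> carrier_mat m n" "Y \<in> carrier_mat m n"
  shows "frob_norm (X + Y) \<le> frob_norm X + frob_norm Y"
proof -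
  have "frob_norm (X + Y) =
      L2_set (\<lambda>ij. (\<lambda>(i, j). X $$ (i, j)) ij + (\<lambda>(i, j). Y $$ (i, j)) ij) ({..<m} \<times> {..<n})"
    using assms by (subst frob_norm_eq_L2_set[of _ m n]) (auto intro!: L2_set_cong)
  also have "\<dots> \<le> frob_norm X + frob_norm Y"
    using assms by (simp add: frob_norm_eq_L2_set[of _ m n] L2_set_triangle_ineq)
  finally show ?thesis .
qed

lemma frob_norm_minus_commute:
  "U \<in> carrier_mat m n \<Longrightarrow> V \<in> carrier_mat m n \<Longrightarrow> frob_norm (U - V) = frob_norm (V - U)"
  unfolding frob_norm_def by (simp add: power2_commute)

lemma frob_norm_transpose: "frob_norm (transpose_mat M) = frob_norm M"
  unfolding frob_norm_def by (simp add: sum.swap[of _ "{..<dim_row M}"])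

lemma frob_norm_eq_cols:
  "M \<in> carrier_mat m n \<Longrightarrow> frob_norm M = sqrt (\<Sum>j<n. col M j \<bullet> col M j)"
  unfolding frob_norm_def
  by (simp add: scalar_prod_self_eq_sum_squares[of _ m] sum.swap[of _ "{..<m}"])

definition contractive_mat :: "nat \<Rightarrow> real mat \<Rightarrow> bool" where
  "contractive_mat n M \<longleftrightarrow> (\<forall>x \<in> carrier_vec n. (M *\<^sub>v x) \<bullet> (M *\<^sub>v x) \<le> x \<bullet> x)"

lemma frob_norm_mult_left_le:
  assumes M: "M \<in> carrier_mat m n" and X: "X \<in> carrier_mat n k"
    and contr: "contractive_mat n M"
  shows "frob_norm (M * X) \<le> frob_norm X"
  unfolding frob_norm_eq_cols[OF mult_carrier_mat[OF M X]] frob_norm_eq_cols[OF X]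
proof (intro real_sqrt_le_mono sum_mono)
  fix j assume "j \<in> {..<k}"
  then have "col (M * X) j = M *\<^sub>v col X j" using col_mult2[OF M X] by simp
  moreover have "col X j \<in> carrier_vec n" using X by auto
  ultimately show "col (M * X) j \<bullet> col (M * X) j \<le> col X j \<bullet> col X j"
    using contr by (simp add: contractive_mat_def)
qed

lemma frob_norm_mult_right_le:
  assumes X: "X \<in> carrier_mat m n" and N: "N \<in> carrier_mat n n"
    and contr: "contractive_mat n (transpose_mat N)"
  shows "frob_norm (X * N) \<le> frob_norm X"
proof -
  have "frob_norm (X * N) = frob_norm (transpose_mat N * transpose_mat X)"
    using transpose_mult[OF X N] frob_norm_transpose by metis
  also have "\<dots> \<le> frob_norm (transpose_mat X)"
    using X N contr by (intro frob_norm_mult_left_le[of _ n n _ m]) auto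
  finally show ?thesis by (simp add: frob_norm_transpose)
qed

lemma sym_pos_def_quadratic_nonneg:
  assumes Q: "sym_pos_def r Q" and y: "y \<in> carrier_vec r"
  shows "0 \<le> y \<bullet> (Q *\<^sub>v y)"
proof (cases "y = 0\<^sub>v r")
  case True
  have "Q *\<^sub>v y \<in> carrier_vec r" using Q y by (auto simp: sym_pos_def_def)
  then show ?thesis using True by simp
next
  case False
  then show ?thesis using Q y unfolding sym_pos_def_def by (auto intro: less_imp_le)
qed

lemma sym_pos_def_one_plus_norm_ge:
  assumes Q: "sym_pos_def r Q" and y: "y \<in> carrier_vec r"
  shows "y \<bullet> y + (Q *\<^sub>v y) \<bullet> (Q *\<^sub>v y) \<le> ((1\<^sub>m r + Q) *\<^sub>v y) \<bullet> ((1\<^sub>m r + Q) *\<^sub>v y)"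
proof -
  have Qc: "Q \<in> carrier_mat r r" using Q by (simp add: sym_pos_def_def)
  have Qy: "Q *\<^sub>v y \<in> carrier_vec r" using Qc y by auto
  have "(1\<^sub>m r + Q) *\<^sub>v y = y + Q *\<^sub>v y"
    using Qc y by (simp add: add_mult_distrib_mat_vec[of _ r r])
  moreover have "(y + Q *\<^sub>v y) \<bullet> (y + Q *\<^sub>v y) =
      y \<bullet> y + 2 * (y \<bullet> (Q *\<^sub>v y)) + (Q *\<^sub>v y) \<bullet> (Q *\<^sub>v y)"
    using Qy y comm_scalar_prod[OF Qy y]
    by (simp add: add_scalar_prod_distrib[of _ r] scalar_prod_add_distrib[of _ r])
  ultimately show ?thesis using sym_pos_def_quadratic_nonneg[OF Q y] by simp
qed

lemma sym_pos_def_one_plus_invertible: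
  assumes Q: "sym_pos_def r Q"
  obtains B where "B \<in> carrier_mat r r" "(1\<^sub>m r + Q) * B = 1\<^sub>m r" "B * (1\<^sub>m r + Q) = 1\<^sub>m r"
proof -
  have P: "1\<^sub>m r + Q \<in> carrier_mat r r" using Q by (auto simp: sym_pos_def_def)
  have "det (1\<^sub>m r + Q) \<noteq> 0"
  proof
    assume "det (1\<^sub>m r + Q) = 0"
    then obtain v where v: "v \<in> carrier_vec r" "v \<noteq> 0\<^sub>v r" "(1\<^sub>m r + Q) *\<^sub>v v = 0\<^sub>v r"
      using det_0_iff_vec_prod_zero_field[OF P] by auto
    have "v \<bullet> v \<le> 0"
      using sym_pos_def_one_plus_norm_ge[OF Q v(1)] v(3) scalar_prod_self_nonneg[of "Q *\<^sub>v v"]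
      by simp
    then show False using scalar_prod_self_le_0_imp_zero[OF v(1)] v(2) by simp
  qed
  then have "1\<^sub>m r + Q \<in> Units (ring_mat TYPE(real) r ())" by (rule det_non_zero_imp_unit[OF P])
  then show ?thesis using that by (auto simp: Units_def ring_mat_def)
qed

lemma mat_inv_eqI:
  assumes P: "P \<in> carrier_mat r r" and B: "B \<in> carrier_mat r r"
    and PB: "P * B = 1\<^sub>m r" and BP: "B * P = 1\<^sub>m r"
  shows "mat_inv r P = B"
  unfolding mat_inv_def
proof (rule the_equality)
  show "B \<in> carrier_mat r r \<and> P * B = 1\<^sub>m r \<and> B * P = 1\<^sub>m r" using B PB BP by simp
  fix C assume C: "C \<in> carrier_mat r r \<and> P * C = 1\<^sub>m r \<and> C * P = 1\<^sub>m r"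
  then have "C = C * (P * B)" using PB by (simp add: right_mult_one_mat[of _ r r])
  also have "\<dots> = (C * P) * B" using C P B by (metis assoc_mult_mat)
  also have "\<dots> = B" using C B by simp
  finally show "C = B" .
qed

lemma mat_inv_sym_pos_def_one_plus:
  assumes Q: "sym_pos_def r Q"
  shows "mat_inv r (1\<^sub>m r + Q) \<in> carrier_mat r r"
    and "(1\<^sub>m r + Q) * mat_inv r (1\<^sub>m r + Q) = 1\<^sub>m r"
    and "mat_inv r (1\<^sub>m r + Q) * (1\<^sub>m r + Q) = 1\<^sub>m r"
proof -
  obtain B where B: "B \<in> carrier_mat r r" "(1\<^sub>m r + Q) * B = 1\<^sub>m r" "B * (1\<^sub>m r + Q) = 1\<^sub>m r"
    using sym_pos_def_one_plus_invertible[OF Q] .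
  moreover have "mat_inv r (1\<^sub>m r + Q) = B"
    using Q B by (intro mat_inv_eqI) (auto simp: sym_pos_def_def)
  ultimately show "mat_inv r (1\<^sub>m r + Q) \<in> carrier_mat r r"
    and "(1\<^sub>m r + Q) * mat_inv r (1\<^sub>m r + Q) = 1\<^sub>m r"
    and "mat_inv r (1\<^sub>m r + Q) * (1\<^sub>m r + Q) = 1\<^sub>m r" by simp_all
qed

lemma sym_pos_def_right_inverse_norm_le:
  assumes Q: "sym_pos_def r Q" and B: "B \<in> carrier_mat r r"
    and PB: "(1\<^sub>m r + Q) * B = 1\<^sub>m r" and x: "x \<in> carrier_vec r"
  shows "(B *\<^sub>v x) \<bullet> (B *\<^sub>v x) + (Q *\<^sub>v (B *\<^sub>v x)) \<bullet> (Q *\<^sub>v (B *\<^sub>v x)) \<le> x \<bullet> x"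
proof -
  have "(1\<^sub>m r + Q) *\<^sub>v (B *\<^sub>v x) = x"
    using Q B x by (simp flip: assoc_mult_mat_vec[of _ r r _ r] add: PB sym_pos_def_def)
  then show ?thesis using sym_pos_def_one_plus_norm_ge[OF Q, of "B *\<^sub>v x"] B x by simp
qed

lemma contractive_transpose_mat_inv_one_plus:
  assumes Q: "sym_pos_def r Q"
  shows "contractive_mat r (transpose_mat (mat_inv r (1\<^sub>m r + Q)))"
  unfolding contractive_mat_def
proof
  fix x :: "real vec" assume x: "x \<in> carrier_vec r"
  let ?P = "1\<^sub>m r + Q" and ?N = "mat_inv r (1\<^sub>m r + Q)"
  note N = mat_inv_sym_pos_def_one_plus[OF Q]
  have Qc: "Q \<in> carrier_mat r r" and Qt: "transpose_mat Q = Q" using Q by (auto simp: sym_pos_def_def)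
  have "Q $$ (j, i) = Q $$ (i, j)" if "i < r" "j < r" for i j
    using arg_cong[OF Qt, of "\<lambda>M. M $$ (i, j)"] that Qc by simp
  then have "transpose_mat ?P = ?P" using Qc by (intro eq_matI) auto
  moreover have "?P \<in> carrier_mat r r" using Qc by simp
  ultimately have "?P * transpose_mat ?N = transpose_mat (?N * ?P)"
    using transpose_mult[OF N(1)] by simp
  then have "?P * transpose_mat ?N = 1\<^sub>m r" using N(3) by simp
  from sym_pos_def_right_inverse_norm_le[OF Q _ this x] N(1)
    scalar_prod_self_nonneg[of "Q *\<^sub>v (transpose_mat ?N *\<^sub>v x)"]
  show "(transpose_mat ?N *\<^sub>v x) \<bullet> (transpose_mat ?N *\<^sub>v x) \<le> x \<bullet> x"
    by simp
qed

lemma blockQ1_carrier: "U \<in> carrier_mat p r \<Longrightarrow> blockQ1 r U \<in> carrier_mat r r"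
  by (simp add: blockQ1_def)

lemma blockQ2_carrier: "U \<in> carrier_mat p r \<Longrightarrow> blockQ2 r U \<in> carrier_mat (p - r) r"
  by (simp add: blockQ2_def)

lemma orth_frame_blocks_norm:
  assumes U: "U \<in> orth_frame p r" and rp: "r \<le> p" and y: "y \<in> carrier_vec r"
  shows "(blockQ1 r U *\<^sub>v y) \<bullet> (blockQ1 r U *\<^sub>v y) + (blockQ2 r U *\<^sub>v y) \<bullet> (blockQ2 r U *\<^sub>v y) = y \<bullet> y"
proof -
  have Uc: "U \<in> carrier_mat p r" and UU: "transpose_mat U * U = 1\<^sub>m r"
    using U by (auto simp: orth_frame_def)
  have Uy: "U *\<^sub>v y \<in> carrier_vec p" using Uc y by auto
  have "y \<bullet> y = (transpose_mat U *\<^sub>v (U *\<^sub>v y)) \<bullet> y"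
    using Uc y by (simp flip: assoc_mult_mat_vec[of _ r p _ r] add: UU)
  also have "\<dots> = (U *\<^sub>v y) \<bullet> (U *\<^sub>v y)"
    using transpose_vec_mult_scalar[OF Uc y Uy] by simp
  also have "\<dots> = (\<Sum>i<r. ((U *\<^sub>v y) $ i)\<^sup>2) + (\<Sum>i<p - r. ((U *\<^sub>v y) $ (i + r))\<^sup>2)"
    by (simp add: scalar_prod_self_eq_sum_squares[OF Uy] sum_lessThan_split[OF rp])
  also have "(\<Sum>i<r. ((U *\<^sub>v y) $ i)\<^sup>2) = (blockQ1 r U *\<^sub>v y) \<bullet> (blockQ1 r U *\<^sub>v y)"
    using Uc y rp blockQ1_carrier[OF Uc]
    by (simp add: scalar_prod_self_eq_sum_squares[of _ r]) (simp add: blockQ1_def scalar_prod_def)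
  also have "(\<Sum>i<p - r. ((U *\<^sub>v y) $ (i + r))\<^sup>2) = (blockQ2 r U *\<^sub>v y) \<bullet> (blockQ2 r U *\<^sub>v y)"
    using Uc y rp blockQ2_carrier[OF Uc]
    by (simp add: scalar_prod_self_eq_sum_squares[of _ "p - r"]) (simp add: blockQ2_def scalar_prod_def)
  finally show ?thesis by simp
qed

lemma frob_norm_blocks_le:
  assumes U: "U \<in> carrier_mat p r" and V: "V \<in> carrier_mat p r" and rp: "r \<le> p"
  shows "frob_norm (blockQ1 r U - blockQ1 r V) \<le> frob_norm (U - V)"
    and "frob_norm (blockQ2 r U - blockQ2 r V) \<le> frob_norm (U - V)"
proof -
  define f where "f i = (\<Sum>j<r. ((U - V) $$ (i, j))\<^sup>2)" for i
  have f_nonneg: "0 \<le> f i" for i unfolding f_def by (auto intro: sum_nonneg)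
  have UV: "frob_norm (U - V) = sqrt ((\<Sum>i<r. f i) + (\<Sum>i<p - r. f (i + r)))"
  proof -
    have "frob_norm (U - V) = sqrt (\<Sum>i<p. f i)" unfolding frob_norm_def f_def using U V by simp
    then show ?thesis by (simp only: sum_lessThan_split[OF rp])
  qed
  have "frob_norm (blockQ1 r U - blockQ1 r V) = sqrt (\<Sum>i<r. f i)"
    unfolding frob_norm_def f_def using U V rp by (simp add: blockQ1_def)
  also have "\<dots> \<le> frob_norm (U - V)"
    unfolding UV by (simp add: f_nonneg sum_nonneg)
  finally show "frob_norm (blockQ1 r U - blockQ1 r V) \<le> frob_norm (U - V)" .
  have "frob_norm (blockQ2 r U - blockQ2 r V) = sqrt (\<Sum>i<p - r. f (i + r))"
    unfolding frob_norm_def f_def using U V rp by (simp add: blockQ2_def)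
  also have "\<dots> \<le> frob_norm (U - V)"
    unfolding UV by (simp add: f_nonneg sum_nonneg)
  finally show "frob_norm (blockQ2 r U - blockQ2 r V) \<le> frob_norm (U - V)" .
qed

lemma inv_cayley_carrier:
  assumes "U \<in> orth_plus p r"
  shows "inv_cayley r U \<in> carrier_mat (p - r) r"
proof -
  have "U \<in> carrier_mat p r" and "sym_pos_def r (blockQ1 r U)"
    using assms by (auto simp: orth_plus_def orth_frame_def)
  then show ?thesis
    unfolding inv_cayley_def
    by (intro mult_carrier_mat[OF blockQ2_carrier mat_inv_sym_pos_def_one_plus(1)])
qed

lemma contractive_inv_cayley:
  assumes U: "U \<in> orth_plus p r" and rp: "r \<le> p"
  shows "contractive_mat r (inv_cayley r U)"
  unfolding contractive_mat_def
proof
  fix x :: "real vec" assume x: "x \<in> carrier_vec r"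
  have Uo: "U \<in> orth_frame p r" and Q: "sym_pos_def r (blockQ1 r U)"
    using U by (auto simp: orth_plus_def)
  have Uc: "U \<in> carrier_mat p r" using Uo by (simp add: orth_frame_def)
  define N where "N = mat_inv r (1\<^sub>m r + blockQ1 r U)"
  note N = mat_inv_sym_pos_def_one_plus[OF Q, folded N_def]
  define y where "y = N *\<^sub>v x"
  have y: "y \<in> carrier_vec r" using N x by (simp add: y_def)
  have "inv_cayley r U *\<^sub>v x = blockQ2 r U *\<^sub>v y"
    using blockQ2_carrier[OF Uc] N x by (simp add: inv_cayley_def N_def[symmetric] y_def)
  moreover have "(blockQ2 r U *\<^sub>v y) \<bullet> (blockQ2 r U *\<^sub>v y) \<le> y \<bullet> y"
    using orth_frame_blocks_norm[OF Uo rp y] scalar_prod_self_nonneg[of "blockQ1 r U *\<^sub>v y"] by simp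
  moreover have "y \<bullet> y \<le> x \<bullet> x"
    using sym_pos_def_right_inverse_norm_le[OF Q N(1,2) x]
      scalar_prod_self_nonneg[of "blockQ1 r U *\<^sub>v y"]
    unfolding y_def by simp
  ultimately show "(inv_cayley r U *\<^sub>v x) \<bullet> (inv_cayley r U *\<^sub>v x) \<le> x \<bullet> x" by simp
qed

lemma difference_of_right_inverses:
  fixes Q2 R2 P P0 N N0 :: "'a :: comm_ring_1 mat"
  assumes Q2: "Q2 \<in> carrier_mat m r" and R2: "R2 \<in> carrier_mat m r"
    and P: "P \<in> carrier_mat r r" and P0: "P0 \<in> carrier_mat r r"
    and N: "N \<in> carrier_mat r r" and N0: "N0 \<in> carrier_mat r r"
    and PN: "P * N = 1\<^sub>m r" and N0P0: "N0 * P0 = 1\<^sub>m r"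
  shows "Q2 * N - R2 * N0 = (Q2 - R2) * N + (R2 * N0) * ((P0 - P) * N)"
proof -
  have RN0: "R2 * N0 \<in> carrier_mat m r" using R2 N0 by simp
  have "(P0 - P) * N = P0 * N - 1\<^sub>m r" using minus_mult_distrib_mat[OF P0 P N] PN by simp
  then have "(R2 * N0) * ((P0 - P) * N) = (R2 * N0) * (P0 * N) - R2 * N0"
    using mult_minus_distrib_mat[OF RN0 mult_carrier_mat[OF P0 N] one_carrier_mat] right_mult_one_mat[OF RN0] by simp
  also have "(R2 * N0) * (P0 * N) = R2 * N"
    using assoc_mult_mat[OF R2 N0 mult_carrier_mat[OF P0 N]] assoc_mult_mat[OF N0 P0 N] N0P0 N
    by simp
  finally show ?thesis
    using Q2 R2 N N0 by (simp add: minus_mult_distrib_mat[OF Q2 R2 N]) (intro eq_matI; auto)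
qed

theorem theorem2:
  fixes p r :: nat and U U0 :: "real mat"
  assumes "1 \<le> r" and "r \<le> p"
    and "U \<in> orth_plus p r" and "U0 \<in> orth_plus p r"
  shows "frob_norm (inv_cayley r U - inv_cayley r U0) \<le> 2 * frob_norm (U - U0)"
proof -
  have Uc: "U \<in> carrier_mat p r" and U0c: "U0 \<in> carrier_mat p r"
    and Q: "sym_pos_def r (blockQ1 r U)" and Q0: "sym_pos_def r (blockQ1 r U0)"
    using assms(3,4) by (auto simp: orth_plus_def orth_frame_def)
  define N where "N = mat_inv r (1\<^sub>m r + blockQ1 r U)"
  define N0 where "N0 = mat_inv r (1\<^sub>m r + blockQ1 r U0)"
  note N = mat_inv_sym_pos_def_one_plus[OF Q, folded N_def]
  note N0 = mat_inv_sym_pos_def_one_plus[OF Q0, folded N0_def]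
  let ?A0 = "inv_cayley r U0"
  let ?D1 = "blockQ1 r U0 - blockQ1 r U" and ?D2 = "blockQ2 r U - blockQ2 r U0"
  have D1: "?D1 \<in> carrier_mat r r" and D2: "?D2 \<in> carrier_mat (p - r) r"
    using blockQ1_carrier[OF Uc] blockQ1_carrier[OF U0c] blockQ2_carrier[OF U0c] by auto
  have "(1\<^sub>m r + blockQ1 r U0) - (1\<^sub>m r + blockQ1 r U) = ?D1"
    using blockQ1_carrier[OF Uc] blockQ1_carrier[OF U0c] by (intro eq_matI) auto
  then have "inv_cayley r U - ?A0 = ?D2 * N + ?A0 * (?D1 * N)"
    using difference_of_right_inverses[OF blockQ2_carrier[OF Uc] blockQ2_carrier[OF U0c]
        _ _ N(1) N0(1) N(2) N0(3)] blockQ1_carrier[OF Uc] blockQ1_carrier[OF U0c]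
    by (simp add: inv_cayley_def N_def N0_def)
  also have "frob_norm \<dots> \<le> frob_norm (?D2 * N) + frob_norm (?A0 * (?D1 * N))"
    using D1 D2 N(1) inv_cayley_carrier[OF assms(4)] by (intro frob_norm_add_le) auto
  also have "\<dots> \<le> frob_norm ?D2 + frob_norm ?D1"
    using D1 D2 N(1) inv_cayley_carrier[OF assms(4)]
      contractive_inv_cayley[OF assms(4,2)] contractive_transpose_mat_inv_one_plus[OF Q, folded N_def]
      frob_norm_mult_left_le[of ?A0 "p - r" r "?D1 * N" r]
      frob_norm_mult_right_le[of ?D1 r r N] frob_norm_mult_right_le[of ?D2 "p - r" r N]
    by fastforce
  also have "\<dots> \<le> 2 * frob_norm (U - U0)"
    using frob_norm_blocks_le[OF Uc U0c assms(2)] frob_norm_blocks_le[OF U0c Uc assms(2)]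
      frob_norm_minus_commute[OF Uc U0c] by simp
  finally show ?thesis .
qed

end
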